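(* Let $G$ be a graph with $n$ vertices. Then $n-\nabla(G)\le \gamma^{DLD}(G)$.
   Context: All graphs are finite, simple and undirected (not necessarily connected). For $u\in V$, $N(u)$ is the set of neighbours of $u$ and $N[u]=N(u)\cup\{u\}$. A code is a non-empty subset $C\subseteq V$; $I(C;u)=N[u]\cap C$. A code $C$ is solid-locating-dominating if $I(C;u)\ne\emptyset$ for every $u\in V\setminus C$ and $I(C;u)\not\subseteq I(C;v)$ for all distinct $u,v\in V\setminus C$; $\gamma^{DLD}(G)$ is the minimum size of such a code. The vicinal preorder $\lesssim$ on $V(G)$ is defined by $x\lesssim y$ iff $N(x)\subseteq N[y]$. A chain is a set $B\subseteq V(G)$ such that any two elements $x,y\in B$ satisfy $x\lesssim y$ or $y\lesssim x$. The Dilworth number $\nabla(G)$ is the minimum number of chains of the vicinal preorder needed to cover $V(G)$ (equivalently, the maximum size of an antichain, i.e. a set $A$ such that $x,y\in A$ and $x\lesssim y$ imply $x=y$). *)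

theory Defs
  imports Main
begin

definition simple_graph :: "'a set \<Rightarrow> ('a \<Rightarrow> 'a \<Rightarrow> bool) \<Rightarrow> bool" where
  "simple_graph V E \<longleftrightarrow> finite V \<and> (\<forall>x y. E x y \<longrightarrow> E y x) \<and> (\<forall>x. \<not> E x x)
     \<and> (\<forall>x y. E x y \<longrightarrow> x \<in> V \<and> y \<in> V)"

definition nbhd :: "'a set \<Rightarrow> ('a \<Rightarrow> 'a \<Rightarrow> bool) \<Rightarrow> 'a \<Rightarrow> 'a set" where
  "nbhd V E u = {v \<in> V. E u v}"

definition closed_nbhd :: "'a set \<Rightarrow> ('a \<Rightarrow> 'a \<Rightarrow> bool) \<Rightarrow> 'a \<Rightarrow> 'a set" where
  "closed_nbhd V E u = insert u (nbhd V E u)"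

definition solid_locating_dominating :: "'a set \<Rightarrow> ('a \<Rightarrow> 'a \<Rightarrow> bool) \<Rightarrow> 'a set \<Rightarrow> bool" where
  "solid_locating_dominating V E C \<longleftrightarrow> C \<noteq> {} \<and> C \<subseteq> V
     \<and> (\<forall>u \<in> V - C. closed_nbhd V E u \<inter> C \<noteq> {})
     \<and> (\<forall>u \<in> V - C. \<forall>v \<in> V - C. u \<noteq> v \<longrightarrow>
           \<not> (closed_nbhd V E u \<inter> C \<subseteq> closed_nbhd V E v \<inter> C))"

definition gamma_DLD :: "'a set \<Rightarrow> ('a \<Rightarrow> 'a \<Rightarrow> bool) \<Rightarrow> nat" where
  "gamma_DLD V E = Inf (card ` {C. solid_locating_dominating V E C})"

definition vicinal_le :: "'a set \<Rightarrow> ('a \<Rightarrow> 'a \<Rightarrow> bool) \<Rightarrow> 'a \<Rightarrow> 'a \<Rightarrow> bool" where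
  "vicinal_le V E x y \<longleftrightarrow> nbhd V E x \<subseteq> closed_nbhd V E y"

definition is_chain :: "'a set \<Rightarrow> ('a \<Rightarrow> 'a \<Rightarrow> bool) \<Rightarrow> 'a set \<Rightarrow> bool" where
  "is_chain V E B \<longleftrightarrow> B \<subseteq> V \<and>
     (\<forall>x \<in> B. \<forall>y \<in> B. vicinal_le V E x y \<or> vicinal_le V E y x)"

definition dilworth_number :: "'a set \<Rightarrow> ('a \<Rightarrow> 'a \<Rightarrow> bool) \<Rightarrow> nat" where
  "dilworth_number V E = Inf {k. \<exists>\<B>. finite \<B> \<and> card \<B> = k
        \<and> (\<forall>B \<in> \<B>. is_chain V E B) \<and> \<Union>\<B> = V}"

end

theory Submission
  imports Defs
begin

text \<open>Two distinct vertices outside a solid-locating-dominating code are incomparable in the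
  vicinal preorder: from \<open>N(u) \<subseteq> N[v]\<close> and \<open>u \<notin> C\<close> we would get \<open>I(C;u) \<subseteq> I(C;v)\<close>.
  Hence \<open>V - C\<close> is an antichain, which meets every chain in at most one vertex, so
  \<open>n - |C| \<le> \<nabla>(G)\<close>.\<close>

lemma solid_locating_dominating_not_vicinal_le:
  assumes "solid_locating_dominating V E C"
    and "u \<in> V - C" and "v \<in> V - C" and "u \<noteq> v"
  shows "\<not> vicinal_le V E u v"
proof
  assume "vicinal_le V E u v"
  with \<open>u \<in> V - C\<close> have "closed_nbhd V E u \<inter> C \<subseteq> closed_nbhd V E v \<inter> C"
    unfolding vicinal_le_def closed_nbhd_def by auto
  with assms show False
    unfolding solid_locating_dominating_def by blast
qed

lemma card_antichain_le_card_chain_cover: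
  assumes "finite \<B>" and "\<forall>B \<in> \<B>. is_chain V E B" and "A \<subseteq> \<Union>\<B>"
    and antichain: "\<And>x y. x \<in> A \<Longrightarrow> y \<in> A \<Longrightarrow> vicinal_le V E x y \<Longrightarrow> x = y"
  shows "card A \<le> card \<B>"
proof -
  define chain_of where "chain_of x = (SOME B. B \<in> \<B> \<and> x \<in> B)" for x
  have chain_of: "chain_of x \<in> \<B> \<and> x \<in> chain_of x" if "x \<in> A" for x
    unfolding chain_of_def by (rule someI_ex) (use that \<open>A \<subseteq> \<Union>\<B>\<close> in blast)
  have "inj_on chain_of A"
  proof (rule inj_onI)
    fix x y assume "x \<in> A" "y \<in> A" "chain_of x = chain_of y"
    with chain_of have "x \<in> chain_of x" "y \<in> chain_of x" "chain_of x \<in> \<B>" by metis+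
    with \<open>\<forall>B \<in> \<B>. is_chain V E B\<close> have "vicinal_le V E x y \<or> vicinal_le V E y x"
      unfolding is_chain_def by blast
    with antichain \<open>x \<in> A\<close> \<open>y \<in> A\<close> show "x = y" by metis
  qed
  moreover have "chain_of ` A \<subseteq> \<B>" using chain_of by blast
  ultimately show ?thesis using \<open>finite \<B>\<close> by (rule card_inj_on_le)
qed

lemma gamma_DLD_attained:
  assumes "V \<noteq> {}"
  obtains C where "solid_locating_dominating V E C" and "card C = gamma_DLD V E"
proof -
  have "solid_locating_dominating V E V"
    using assms unfolding solid_locating_dominating_def by auto
  then have "card ` {C. solid_locating_dominating V E C} \<noteq> {}" by blast
  then have "gamma_DLD V E \<in> card ` {C. solid_locating_dominating V E C}"
    unfolding gamma_DLD_def by (rule Inf_nat_def1)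
  with that show ?thesis by auto
qed

lemma dilworth_number_attained:
  assumes "finite V"
  obtains \<B> where "finite \<B>" and "card \<B> = dilworth_number V E"
    and "\<forall>B \<in> \<B>. is_chain V E B" and "\<Union>\<B> = V"
proof -
  let ?K = "{k. \<exists>\<B>. finite \<B> \<and> card \<B> = k \<and> (\<forall>B \<in> \<B>. is_chain V E B) \<and> \<Union>\<B> = V}"
  have "card ((\<lambda>x. {x}) ` V) \<in> ?K"
    using assms unfolding is_chain_def vicinal_le_def closed_nbhd_def
    by (intro CollectI exI[of _ "(\<lambda>x. {x}) ` V"]) auto
  then have "dilworth_number V E \<in> ?K"
    unfolding dilworth_number_def by (intro Inf_nat_def1) blast
  with that show ?thesis by blast
qed

theorem mainTheorem6:
  fixes V :: "'a set" and E :: "'a \<Rightarrow> 'a \<Rightarrow> bool" and n :: nat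
  assumes "simple_graph V E" and "card V = n"
  shows "int n - int (dilworth_number V E) \<le> int (gamma_DLD V E)"
proof (cases "V = {}")
  case True
  with assms(2) show ?thesis by simp
next
  case False
  have "finite V" using assms(1) unfolding simple_graph_def by simp
  obtain C where sld: "solid_locating_dominating V E C" and "card C = gamma_DLD V E"
    using gamma_DLD_attained[OF False] .
  obtain \<B> where "finite \<B>" "card \<B> = dilworth_number V E"
    and "\<forall>B \<in> \<B>. is_chain V E B" and "\<Union>\<B> = V"
    using dilworth_number_attained[OF \<open>finite V\<close>] .
  then have "card (V - C) \<le> dilworth_number V E"
    using solid_locating_dominating_not_vicinal_le[OF sld]
    by (metis card_antichain_le_card_chain_cover Diff_subset)
  moreover have "C \<subseteq> V" using sld unfolding solid_locating_dominating_def by simp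
  then have "card V = card C + card (V - C)"
    using \<open>finite V\<close> by (metis card_Diff_subset card_mono finite_subset le_add_diff_inverse)
  ultimately show ?thesis using assms(2) \<open>card C = gamma_DLD V E\<close> by simp
qed

end
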